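(* Let $n=2^t m$ with $t\ge 0$ and $m$ odd, and let $D_n$ be the dihedral group of order $2n$. Then $\mathrm{mixlen}(D_n)\le t+m$.
   Context: For a finite group $G$, a random subproduct is a random element $g_1^{\epsilon_1}\cdots g_k^{\epsilon_k}$ with $g_1,\dots,g_k\in G$ fixed and $\epsilon_1,\dots,\epsilon_k$ independent Bernoulli random variables, $\epsilon_i\sim\mathrm{Ber}(p_i)$, $p_i\in[0,1]$. $\mathrm{mixlen}(G)$ is the minimal number $k$ of factors in a random subproduct that is distributed exactly uniformly on $G$. *)

theory Defs
  imports Complex_Main "HOL-Algebra.Group"
begin

text \<open>Dihedral group of order 2n (n \<ge> 1): elements (a, s) with a \<in> {0..<n} standing for
  r^a s^[s]; r rotation of order n, s reflection, s r s = r^{-1}.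
  (a,s)(b,u) = (a + (if s then -b else b) mod n, s xor u).\<close>
definition dihedral_group :: "nat \<Rightarrow> (int \<times> bool) monoid" where
  "dihedral_group n = \<lparr> carrier = {0..<int n} \<times> UNIV,
     mult = (\<lambda>(a, s) (b, u). ((a + (if s then - b else b)) mod int n, s \<noteq> u)),
     one = (0, False) \<rparr>"

definition subprod :: "('a, 'b) monoid_scheme \<Rightarrow> 'a list \<Rightarrow> bool list \<Rightarrow> 'a" where
  "subprod G gs es = foldr (\<lambda>(g, e) acc. (if e then g else \<one>\<^bsub>G\<^esub>) \<otimes>\<^bsub>G\<^esub> acc) (zip gs es) \<one>\<^bsub>G\<^esub>"

definition subprod_prob :: "('a, 'b) monoid_scheme \<Rightarrow> 'a list \<Rightarrow> real list \<Rightarrow> 'a \<Rightarrow> real" where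
  "subprod_prob G gs ps x =
     (\<Sum>es \<in> {es. length es = length gs}.
        if subprod G gs es = x
        then (\<Prod>i<length gs. if es ! i then ps ! i else 1 - ps ! i) else 0)"

definition uniform_subproduct :: "('a, 'b) monoid_scheme \<Rightarrow> 'a list \<Rightarrow> real list \<Rightarrow> bool" where
  "uniform_subproduct G gs ps \<longleftrightarrow>
     length ps = length gs \<and> set gs \<subseteq> carrier G \<and> (\<forall>p \<in> set ps. 0 \<le> p \<and> p \<le> 1) \<and>
     (\<forall>x \<in> carrier G. subprod_prob G gs ps x = 1 / real (card (carrier G)))"

definition mixlen :: "('a, 'b) monoid_scheme \<Rightarrow> nat" where
  "mixlen G = (LEAST k. \<exists>gs ps. length gs = k \<and> uniform_subproduct G gs ps)"

end

theory Submission
  imports Defs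
begin

text \<open>
  A random subproduct on the dihedral group is described by the Fourier transforms
  F_e(w) = sum_c P(r^c s^e) w^c at the n-th roots of unity w; it is uniform iff F_e(1) = 1/2 and
  F_e(w) = 0 for w \<noteq> 1. Prepending the rotation r^b with probability p multiplies every F_e by
  1 - p + p w^b, and prepending a reflection r^b s with probability 1/2 forces
  F_True = w^b cnj F_False.

  Write n = 2^t m with m = 2h + 1. The t fair rotations r^(m 2^j) kill every w with w^m \<noteq> 1,
  because then (w^m)^(2^j) = -1 for some j < t. For the other w, start with a fair reflection and
  add h rounds, each a rotation r^(c_k) with probability p_k followed by a suitably placed fair
  reflection; a round multiplies F_False by w^(c_k) ((1 - p_k) Re (w^(c_k)) + p_k). Choosing c_k
  with Re (u_k^(c_k)) \<le> 0 for u_k = exp (2 pi i k / m), and then p_k, makes this factor vanish at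
  u_k and at its conjugate, and these exhaust the m-th roots of unity other than 1.
  The length is t + 2h + 1 = t + m.
\<close>

lemma dihedral_group_carrier [simp]: "carrier (dihedral_group n) = {0..<int n} \<times> UNIV"
  and dihedral_group_one [simp]: "\<one>\<^bsub>dihedral_group n\<^esub> = (0, False)"
  and dihedral_group_mult [simp]:
    "(a, s) \<otimes>\<^bsub>dihedral_group n\<^esub> (b, u) = ((a + (if s then - b else b)) mod int n, s \<noteq> u)"
  by (simp_all add: dihedral_group_def)

lemma group_dihedral_group:
  assumes "n > 0"
  shows "group (dihedral_group n)"
proof (rule groupI)
  show "x \<otimes>\<^bsub>dihedral_group n\<^esub> y \<in> carrier (dihedral_group n)" for x y
    using assms by (cases x; cases y) simp
  show "\<one>\<^bsub>dihedral_group n\<^esub> \<in> carrier (dihedral_group n)"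
    using assms by simp
  show "\<one>\<^bsub>dihedral_group n\<^esub> \<otimes>\<^bsub>dihedral_group n\<^esub> x = x"
    if "x \<in> carrier (dihedral_group n)" for x
    using that by (cases x) simp
  show "x \<otimes>\<^bsub>dihedral_group n\<^esub> y \<otimes>\<^bsub>dihedral_group n\<^esub> z =
      x \<otimes>\<^bsub>dihedral_group n\<^esub> (y \<otimes>\<^bsub>dihedral_group n\<^esub> z)" for x y z
  proof -
    obtain a s b u c v where "x = (a, s)" "y = (b, u)" "z = (c, v)"
      by (cases x, cases y, cases z)
    then show ?thesis by (cases s; cases u) (simp_all add: mod_simps algebra_simps)
  qed
  show "\<exists>y \<in> carrier (dihedral_group n). y \<otimes>\<^bsub>dihedral_group n\<^esub> x = \<one>\<^bsub>dihedral_group n\<^esub>"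
    if "x \<in> carrier (dihedral_group n)" for x
  proof -
    obtain a s where x: "x = (a, s)" by (cases x)
    then have "(if s then a else - a mod int n, s) \<otimes>\<^bsub>dihedral_group n\<^esub> x =
        \<one>\<^bsub>dihedral_group n\<^esub>"
      by (cases s) (simp_all add: mod_add_left_eq)
    moreover have "(if s then a else - a mod int n, s) \<in> carrier (dihedral_group n)"
      using that assms x by simp
    ultimately show ?thesis by blast
  qed
qed

lemma dihedral_inv:
  assumes "n > 0" "0 \<le> b" "b < int n"
  shows "inv\<^bsub>dihedral_group n\<^esub> (b, s) = (if s then b else - b mod int n, s)"
proof (rule group.inv_equality[OF group_dihedral_group[OF assms(1)]])
  show "(if s then b else - b mod int n, s) \<otimes>\<^bsub>dihedral_group n\<^esub> (b, s) =
      \<one>\<^bsub>dihedral_group n\<^esub>"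
    by (cases s) (simp_all add: mod_add_left_eq)
qed (use assms in auto)

lemma card_dihedral_group: "card (carrier (dihedral_group n)) = 2 * n"
  by (simp add: card_cartesian_product)

lemma subprod_Nil [simp]: "subprod G [] es = \<one>\<^bsub>G\<^esub>"
  and subprod_Cons [simp]:
    "subprod G (g # gs) (e # es) = (if e then g else \<one>\<^bsub>G\<^esub>) \<otimes>\<^bsub>G\<^esub> subprod G gs es"
  by (simp_all add: subprod_def)

lemma (in monoid) subprod_closed: "set gs \<subseteq> carrier G \<Longrightarrow> subprod G gs es \<in> carrier G"
proof (induction gs arbitrary: es)
  case (Cons g gs)
  then show ?case by (cases es) (auto simp: subprod_def)
qed simp

lemma sum_bool_lists_Suc:
  "(\<Sum>es \<in> {es :: bool list. length es = Suc k}. f es) =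
   (\<Sum>es \<in> {es. length es = k}. f (True # es) + f (False # es))"
proof -
  let ?L = "{es :: bool list. length es = k}"
  have "{es :: bool list. length es = Suc k} = Cons True ` ?L \<union> Cons False ` ?L"
    by (auto simp: length_Suc_conv)
  moreover have "finite ?L" using finite_lists_length_eq[of "UNIV :: bool set"] by simp
  then have "sum f (Cons True ` ?L \<union> Cons False ` ?L) =
      sum f (Cons True ` ?L) + sum f (Cons False ` ?L)"
    by (intro sum.union_disjoint) auto
  ultimately show ?thesis
    by (simp add: sum.reindex sum.distrib)
qed

lemma subprod_prob_Nil: "subprod_prob G [] [] x = (if x = \<one>\<^bsub>G\<^esub> then 1 else 0)"
proof -
  have "{es :: bool list. length es = 0} = {[]}" by auto
  then show ?thesis by (simp add: subprod_prob_def)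
qed

lemma (in group) subprod_prob_Cons:
  assumes "g \<in> carrier G" "set gs \<subseteq> carrier G" "x \<in> carrier G" "length ps = length gs"
  shows "subprod_prob G (g # gs) (p # ps) x =
    (1 - p) * subprod_prob G gs ps x + p * subprod_prob G gs ps (inv g \<otimes> x)"
proof -
  let ?w = "\<lambda>es. \<Prod>i<length gs. if es ! i then ps ! i else 1 - ps ! i"
  have summand: "(if subprod G (g # gs) (e # es) = x
         then \<Prod>i<Suc (length gs). if (e # es) ! i then (p # ps) ! i else 1 - (p # ps) ! i else 0) =
      (if e then p * (if subprod G gs es = inv g \<otimes> x then ?w es else 0)
       else (1 - p) * (if subprod G gs es = x then ?w es else 0))" for e es
  proof -
    have "g \<otimes> subprod G gs es = x \<longleftrightarrow> subprod G gs es = inv g \<otimes> x"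
      using assms subprod_closed by (metis inv_solve_left)
    moreover have "\<one> \<otimes> subprod G gs es = subprod G gs es"
      using assms subprod_closed by simp
    ultimately show ?thesis
      unfolding prod.lessThan_Suc_shift nth_Cons_Suc by simp
  qed
  then show ?thesis
    unfolding subprod_prob_def length_Cons sum_bool_lists_Suc summand
    by (simp add: sum.distrib sum_distrib_left add.commute)
qed

lemma dihedral_subprod_prob_Cons:
  assumes "n > 0" "0 \<le> b" "b < int n" "0 \<le> c" "c < int n"
    and "set gs \<subseteq> carrier (dihedral_group n)" "length ps = length gs"
  shows "subprod_prob (dihedral_group n) ((b, s) # gs) (p # ps) (c, e) =
    (1 - p) * subprod_prob (dihedral_group n) gs ps (c, e) +
    p * subprod_prob (dihedral_group n) gs ps (if s then (b - c) mod int n else (c - b) mod int n, s \<noteq> e)"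
proof -
  interpret group "dihedral_group n" using group_dihedral_group[OF assms(1)] .
  show ?thesis
    using assms by (subst subprod_prob_Cons) (auto simp: dihedral_inv mod_simps)
qed

lemma mixlen_le: "uniform_subproduct G gs ps \<Longrightarrow> mixlen G \<le> length gs"
  unfolding mixlen_def by (rule Least_le) blast

section \<open>Roots of unity\<close>

lemma power_int_mod_root_unity:
  fixes w :: "'a :: field"
  assumes "w ^ n = 1"
  shows "w powi (a mod int n) = w powi a"
proof (cases "n = 0")
  case False
  then have "w \<noteq> 0" using assms by (auto simp: power_0_left)
  have "w powi a = w powi (a mod int n + int n * (a div int n))" by simp
  also have "\<dots> = w powi (a mod int n) * (w powi int n) powi (a div int n)"
    using \<open>w \<noteq> 0\<close> by (simp only: power_int_add power_int_mult simp_thms)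
  finally show ?thesis using assms by simp
qed simp

lemma norm_root_unity:
  fixes w :: complex
  assumes "n > 0" "w ^ n = 1"
  shows "norm w = 1"
proof -
  have "norm w ^ n = 1 ^ n" using assms(2) by (simp flip: norm_power)
  from power_eq_imp_eq_base[OF this norm_ge_zero zero_le_one assms(1)] show ?thesis .
qed

lemma cnj_root_unity:
  fixes w :: complex
  assumes "n > 0" "w ^ n = 1"
  shows "cnj w = inverse w"
proof -
  have "w * cnj w = 1"
    using norm_root_unity[OF assms] by (simp flip: complex_norm_square)
  then show ?thesis by (simp add: inverse_unique)
qed

lemma powi_mult_cnj_root_unity:
  fixes w :: complex
  assumes "n > 0" "w ^ n = 1"
  shows "w powi b * cnj (w powi b) = 1"
proof -
  have "w \<noteq> 0" using assms by (auto simp: power_0_left)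
  then show ?thesis by (simp add: cnj_root_unity[OF assms] power_int_inverse)
qed

lemma sum_roots_unity_power_int:
  assumes "n > 0"
  shows "(\<Sum>w | w ^ n = 1. w powi a) = (if int n dvd a then of_nat n else (0 :: complex))"
proof (cases "int n dvd a")
  case True
  then have "w powi a = 1" if "w ^ n = 1" for w :: complex
    using power_int_mod_root_unity[OF that, of a] by simp
  then show ?thesis using True card_roots_unity_eq[OF assms] by simp
next
  case False
  define \<zeta> where "\<zeta> = cis (2 * pi / real n)"
  let ?R = "{w :: complex. w ^ n = 1}"
  have \<zeta>_pow: "\<zeta> ^ k = cis (2 * pi * real k / real n)" for k
    by (simp add: \<zeta>_def DeMoivre mult_ac)
  have \<zeta>_root: "\<zeta> ^ n = 1"
    using assms by (simp add: \<zeta>_pow complex_eq_iff)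
  have \<zeta>_nz: "\<zeta> \<noteq> 0" by (simp add: \<zeta>_def)
  have "\<zeta> powi a = \<zeta> ^ nat (a mod int n)"
    using power_int_mod_root_unity[OF \<zeta>_root, of a] assms
    by (simp add: power_int_nonneg_exp)
  moreover have "0 < a mod int n"
    using False assms by (metis dvd_eq_mod_eq_0 order_le_neq_trans pos_mod_sign of_nat_0_less_iff)
  then have "nat (a mod int n) \<in> {..<n}" "nat (a mod int n) \<noteq> 0"
    using assms by (auto simp: nat_less_iff)
  then have "\<zeta> ^ nat (a mod int n) \<noteq> \<zeta> ^ 0"
    using bij_betw_roots_unity[OF assms] unfolding \<zeta>_pow bij_betw_def inj_on_def
    by (metis lessThan_iff assms)
  ultimately have ne: "\<zeta> powi a \<noteq> 1" by simp
  have "(\<Sum>w\<in>?R. w powi a) = (\<Sum>w\<in>?R. (\<zeta> * w) powi a)"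
    by (rule sum.reindex_bij_witness[where i = "\<lambda>w. \<zeta> * w" and j = "\<lambda>w. w / \<zeta>"])
      (use \<zeta>_nz \<zeta>_root in \<open>auto simp: power_mult_distrib power_divide\<close>)
  also have "\<dots> = \<zeta> powi a * (\<Sum>w\<in>?R. w powi a)"
    by (simp add: power_int_mult_distrib sum_distrib_left)
  finally show ?thesis using ne False by (simp add: algebra_simps)
qed

lemma exists_power_Re_nonpos:
  fixes q :: complex
  assumes "m > 0" "q ^ m = 1" "q \<noteq> 1"
  shows "\<exists>c < m. Re (q ^ c) \<le> 0"
proof (rule ccontr)
  assume "\<not> ?thesis"
  then have "0 < (\<Sum>c < m. Re (q ^ c))" using assms(1) by (intro sum_pos) auto
  moreover have "(\<Sum>c < m. q ^ c) = 0" using assms by (simp add: geometric_sum)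
  then have "(\<Sum>c < m. Re (q ^ c)) = 0" by (simp flip: Re_sum)
  ultimately show False by simp
qed

lemma exists_power_two_eq_neg_one:
  fixes q :: "'a :: idom"
  shows "q ^ (2 ^ s) = 1 \<Longrightarrow> q \<noteq> 1 \<Longrightarrow> \<exists>j < s. q ^ (2 ^ j) = -1"
proof (induction s)
  case (Suc s)
  show ?case
  proof (cases "q ^ (2 ^ s) = 1")
    case True
    then show ?thesis using Suc by (meson less_SucI)
  next
    case False
    have "(q ^ (2 ^ s))\<^sup>2 = 1" using Suc.prems by (simp add: power_mult[symmetric] mult.commute)
    then show ?thesis using False by (auto simp: power2_eq_1_iff)
  qed
qed simp

lemma exists_cis_power_Re_nonpos:
  assumes "0 < i" "i < m"
  shows "\<exists>c < m. Re (cis (2 * pi * real i / real m) ^ c) \<le> 0"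
proof (rule exists_power_Re_nonpos)
  have "bij_betw (\<lambda>k. cis (2 * pi * real k / real m)) {..<m} {z. z ^ m = 1}"
    using assms by (intro bij_betw_roots_unity) simp
  then show "cis (2 * pi * real i / real m) ^ m = 1" "cis (2 * pi * real i / real m) \<noteq> 1"
    using assms inj_onD[of "\<lambda>k. cis (2 * pi * real k / real m)" "{..<m}" i 0]
    by (auto simp: bij_betw_def)
qed (use assms in simp)

lemma odd_root_unity_cases:
  assumes "m = 2 * h + 1" "w ^ m = 1" "w \<noteq> 1"
  obtains i where "i \<in> {1..h}"
    "w = cis (2 * pi * real i / real m) \<or> w = cnj (cis (2 * pi * real i / real m))"
proof -
  have "m > 0" using assms(1) by simp
  then obtain k where k: "k < m" "w = cis (2 * pi * real k / real m)"
    using bij_betw_roots_unity[of m] assms(2) by (auto simp: bij_betw_def)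
  have "k \<noteq> 0" using assms(3) k(2) by (intro notI) simp
  show thesis
  proof (cases "k \<le> h")
    case True
    then have "k \<in> {1..h}" using \<open>k \<noteq> 0\<close> by simp
    then show thesis using that k(2) by blast
  next
    case False
    have "2 * pi * real k / real m = 2 * pi + - (2 * pi * real (m - k) / real m)"
      using k(1) \<open>m > 0\<close> by (simp add: field_simps of_nat_diff)
    then have "w = cis (2 * pi) * cis (- (2 * pi * real (m - k) / real m))"
      using k(2) by (simp only: cis_mult)
    then have "w = cnj (cis (2 * pi * real (m - k) / real m))"
      by (simp add: cis_cnj)
    moreover have "m - k \<in> {1..h}" using False k(1) assms(1) by auto
    ultimately show thesis using that by blast
  qed
qed

lemma affine_add_conj_rotated:
  fixes u :: complex
  assumes "norm u = 1"
  shows "(1 - of_real p + of_real p * u) + u\<^sup>2 * cnj (1 - of_real p + of_real p * u) =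
    2 * u * of_real ((1 - p) * Re u + p)"
proof -
  have unit: "u * cnj u = 1" using assms by (simp flip: complex_norm_square)
  have "2 * u * of_real (Re u) = u * (u + cnj u)" by (simp add: complex_add_cnj)
  also have "\<dots> = u\<^sup>2 + u * cnj u" by (simp add: algebra_simps power2_eq_square)
  finally have square: "1 + u\<^sup>2 = 2 * u * of_real (Re u)" using unit by simp
  have "(1 - of_real p + of_real p * u) + u\<^sup>2 * cnj (1 - of_real p + of_real p * u) =
      (1 - of_real p) * (1 + u\<^sup>2) + of_real p * u + of_real p * u * (u * cnj u)"
    by (simp add: algebra_simps power2_eq_square)
  also have "\<dots> = 2 * u * of_real ((1 - p) * Re u + p)"
    unfolding square unit by (simp add: algebra_simps)
  finally show ?thesis .
qed

section \<open>Fourier transform on the integers modulo n\<close>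

lemma sum_roots_unity_power_int_diff:
  assumes "n > 0" "c \<in> {0..<int n}" "x \<in> {0..<int n}"
  shows "(\<Sum>w | w ^ n = 1. w powi (c - x)) = (if c = x then of_nat n else (0 :: complex))"
proof -
  have "int n dvd c - x \<longleftrightarrow> c mod int n = x mod int n"
    by (simp add: mod_eq_dvd_iff)
  also have "\<dots> \<longleftrightarrow> c = x" using assms(2,3) by simp
  finally show ?thesis by (simp add: sum_roots_unity_power_int[OF assms(1)])
qed

definition cyclic_fourier :: "nat \<Rightarrow> (int \<Rightarrow> real) \<Rightarrow> complex \<Rightarrow> complex" where
  "cyclic_fourier n f w = (\<Sum>c \<in> {0..<int n}. of_real (f c) * w powi c)"

lemma cyclic_fourier_cong:
  "(\<And>c. c \<in> {0..<int n} \<Longrightarrow> f c = g c) \<Longrightarrow> cyclic_fourier n f w = cyclic_fourier n g w"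
  unfolding cyclic_fourier_def by (intro sum.cong) auto

lemma cyclic_fourier_lincomb:
  "cyclic_fourier n (\<lambda>c. a * f c + b * g c) w =
    of_real a * cyclic_fourier n f w + of_real b * cyclic_fourier n g w"
  unfolding cyclic_fourier_def by (simp add: sum.distrib sum_distrib_left algebra_simps)

lemma bij_betw_mod_shift: "bij_betw (\<lambda>c. (c + b) mod int n) {0..<int n} {0..<int n}"
  by (rule bij_betwI[where g = "\<lambda>c. (c - b) mod int n"]) (auto simp: mod_diff_left_eq mod_add_left_eq)

lemma bij_betw_mod_reflect: "bij_betw (\<lambda>c. (b - c) mod int n) {0..<int n} {0..<int n}"
  by (rule bij_betwI[where g = "\<lambda>c. (b - c) mod int n"]) (auto simp: mod_diff_right_eq)

lemma cyclic_fourier_shift: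
  assumes "n > 0" "w ^ n = 1"
  shows "cyclic_fourier n (\<lambda>c. f ((c - b) mod int n)) w = w powi b * cyclic_fourier n f w"
proof -
  have "w \<noteq> 0" using assms by (auto simp: power_0_left)
  have "cyclic_fourier n (\<lambda>c. f ((c - b) mod int n)) w =
      (\<Sum>c \<in> {0..<int n}. of_real (f (((c + b) mod int n - b) mod int n)) * w powi ((c + b) mod int n))"
    unfolding cyclic_fourier_def by (rule sum.reindex_bij_betw[OF bij_betw_mod_shift, symmetric])
  also have "\<dots> = (\<Sum>c \<in> {0..<int n}. w powi b * (of_real (f c) * w powi c))"
    using \<open>w \<noteq> 0\<close> by (intro sum.cong refl)
      (simp add: mod_diff_left_eq power_int_mod_root_unity[OF assms(2)] power_int_add)
  finally show ?thesis by (simp add: cyclic_fourier_def sum_distrib_left)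
qed

lemma cyclic_fourier_reflect:
  assumes "n > 0" "w ^ n = 1"
  shows "cyclic_fourier n (\<lambda>c. f ((b - c) mod int n)) w = w powi b * cnj (cyclic_fourier n f w)"
proof -
  have "w \<noteq> 0" using assms by (auto simp: power_0_left)
  have "cyclic_fourier n (\<lambda>c. f ((b - c) mod int n)) w =
      (\<Sum>c \<in> {0..<int n}. of_real (f ((b - (b - c) mod int n) mod int n)) * w powi ((b - c) mod int n))"
    unfolding cyclic_fourier_def by (rule sum.reindex_bij_betw[OF bij_betw_mod_reflect, symmetric])
  also have "\<dots> = (\<Sum>c \<in> {0..<int n}. w powi b * cnj (of_real (f c) * w powi c))"
    using \<open>w \<noteq> 0\<close> by (intro sum.cong refl)
      (simp add: mod_diff_right_eq power_int_mod_root_unity[OF assms(2)] cnj_root_unity[OF assms]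
        power_int_inverse power_int_diff field_simps)
  finally show ?thesis by (simp add: cyclic_fourier_def sum_distrib_left cnj_sum)
qed

lemma cyclic_fourier_inversion:
  assumes "n > 0" and vanish: "\<And>w. w ^ n = 1 \<Longrightarrow> w \<noteq> 1 \<Longrightarrow> cyclic_fourier n f w = 0"
    and x: "x \<in> {0..<int n}"
  shows "f x = (\<Sum>c \<in> {0..<int n}. f c) / real n"
proof -
  let ?R = "{w :: complex. w ^ n = 1}"
  have fin: "finite ?R" using assms(1) by (intro finite_roots_unity) simp
  have "(\<Sum>w\<in>?R. w powi (- x) * cyclic_fourier n f w) = cyclic_fourier n f 1"
    using fin vanish by (subst sum.remove[of _ 1]) (auto intro!: sum.neutral)
  also have "\<dots> = of_real (\<Sum>c \<in> {0..<int n}. f c)"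
    by (simp add: cyclic_fourier_def)
  finally have lhs: "(\<Sum>w\<in>?R. w powi (- x) * cyclic_fourier n f w) = of_real (\<Sum>c \<in> {0..<int n}. f c)" .
  have summand: "w powi (- x) * (of_real (f c) * w powi c) = of_real (f c) * w powi (c - x)"
    if "w \<in> ?R" for w c
  proof -
    have "w \<noteq> 0" using that assms(1) by (auto simp: power_0_left)
    then show ?thesis by (simp add: power_int_diff power_int_minus field_simps)
  qed
  have "(\<Sum>w\<in>?R. w powi (- x) * cyclic_fourier n f w) =
      (\<Sum>c \<in> {0..<int n}. \<Sum>w\<in>?R. w powi (- x) * (of_real (f c) * w powi c))"
    unfolding cyclic_fourier_def sum_distrib_left by (rule sum.swap)
  also have "\<dots> = (\<Sum>c \<in> {0..<int n}. of_real (f c) * (\<Sum>w\<in>?R. w powi (c - x)))"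
    unfolding sum_distrib_left by (intro sum.cong refl) (simp add: summand)
  also have "\<dots> = (\<Sum>c \<in> {0..<int n}. if c = x then of_real (f c) * of_nat n else 0)"
    by (intro sum.cong refl) (simp add: sum_roots_unity_power_int_diff[OF assms(1) _ x])
  also have "\<dots> = of_real (f x * real n)" using x by simp
  finally have "of_real (f x * real n) = (of_real (\<Sum>c \<in> {0..<int n}. f c) :: complex)"
    using lhs by simp
  then have "f x * real n = (\<Sum>c \<in> {0..<int n}. f c)" by (simp only: of_real_eq_iff)
  then show ?thesis using assms(1) by (simp add: field_simps)
qed

section \<open>Fourier transform of dihedral subproducts\<close>

definition dihedral_fourier :: "nat \<Rightarrow> (int \<times> bool) list \<Rightarrow> real list \<Rightarrow> bool \<Rightarrow> complex \<Rightarrow> complex" where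
  "dihedral_fourier n gs ps e = cyclic_fourier n (\<lambda>c. subprod_prob (dihedral_group n) gs ps (c, e))"

lemma dihedral_fourier_Nil:
  assumes "n > 0"
  shows "dihedral_fourier n [] [] e w = (if e then 0 else 1)"
proof -
  have "dihedral_fourier n [] [] e w = (\<Sum>c \<in> {0..<int n}. if c = 0 \<and> \<not> e then 1 else 0)"
    unfolding dihedral_fourier_def cyclic_fourier_def subprod_prob_Nil by (intro sum.cong) auto
  then show ?thesis using assms by (simp add: sum.delta)
qed

lemma dihedral_fourier_Cons_rotation:
  assumes "n > 0" "w ^ n = 1" "0 \<le> b" "b < int n"
    and "set gs \<subseteq> carrier (dihedral_group n)" "length ps = length gs"
  shows "dihedral_fourier n ((b, False) # gs) (p # ps) e w =
    (1 - of_real p + of_real p * w powi b) * dihedral_fourier n gs ps e w"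
proof -
  let ?P = "\<lambda>c. subprod_prob (dihedral_group n) gs ps (c, e)"
  have "dihedral_fourier n ((b, False) # gs) (p # ps) e w =
      cyclic_fourier n (\<lambda>c. (1 - p) * ?P c + p * ?P ((c - b) mod int n)) w"
    unfolding dihedral_fourier_def using assms
    by (intro cyclic_fourier_cong) (simp add: dihedral_subprod_prob_Cons)
  also have "\<dots> = (1 - of_real p) * cyclic_fourier n ?P w + of_real p * (w powi b * cyclic_fourier n ?P w)"
    by (simp add: cyclic_fourier_lincomb cyclic_fourier_shift[OF assms(1,2), where f = ?P])
  finally show ?thesis by (simp add: dihedral_fourier_def algebra_simps)
qed

lemma dihedral_fourier_Cons_reflection:
  assumes "n > 0" "w ^ n = 1" "0 \<le> b" "b < int n"
    and "set gs \<subseteq> carrier (dihedral_group n)" "length ps = length gs"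
  shows "dihedral_fourier n ((b, True) # gs) (p # ps) e w =
    (1 - of_real p) * dihedral_fourier n gs ps e w +
    of_real p * w powi b * cnj (dihedral_fourier n gs ps (\<not> e) w)"
proof -
  let ?P = "\<lambda>e c. subprod_prob (dihedral_group n) gs ps (c, e)"
  have "dihedral_fourier n ((b, True) # gs) (p # ps) e w =
      cyclic_fourier n (\<lambda>c. (1 - p) * ?P e c + p * ?P (\<not> e) ((b - c) mod int n)) w"
    unfolding dihedral_fourier_def using assms
    by (intro cyclic_fourier_cong) (simp add: dihedral_subprod_prob_Cons)
  also have "\<dots> = (1 - of_real p) * cyclic_fourier n (?P e) w +
      of_real p * (w powi b * cnj (cyclic_fourier n (?P (\<not> e)) w))"
    by (simp add: cyclic_fourier_lincomb cyclic_fourier_reflect[OF assms(1,2), where f = "?P (\<not> e)"])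
  finally show ?thesis by (simp add: dihedral_fourier_def algebra_simps)
qed

lemma dihedral_fourier_fair_reflection:
  assumes "n > 0" "w ^ n = 1" "0 \<le> b" "b < int n"
    and "set gs \<subseteq> carrier (dihedral_group n)" "length ps = length gs"
  shows "dihedral_fourier n ((b, True) # gs) (1/2 # ps) True w =
    w powi b * cnj (dihedral_fourier n ((b, True) # gs) (1/2 # ps) False w)"
proof -
  have "w powi b * cnj w powi b = 1"
    using powi_mult_cnj_root_unity[OF assms(1,2)] by simp
  then show ?thesis
    by (simp add: dihedral_fourier_Cons_reflection[OF assms] algebra_simps)
qed

lemma uniform_subproduct_dihedralI:
  assumes "n > 0" "set gs \<subseteq> carrier (dihedral_group n)" "length ps = length gs"
    and "\<forall>p \<in> set ps. 0 \<le> p \<and> p \<le> 1"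
    and at_one: "\<And>e. dihedral_fourier n gs ps e 1 = 1/2"
    and vanish: "\<And>e w. w ^ n = 1 \<Longrightarrow> w \<noteq> 1 \<Longrightarrow> dihedral_fourier n gs ps e w = 0"
  shows "uniform_subproduct (dihedral_group n) gs ps"
proof -
  have "subprod_prob (dihedral_group n) gs ps (c, e) = 1 / real (card (carrier (dihedral_group n)))"
    if "c \<in> {0..<int n}" for c e
  proof -
    let ?f = "\<lambda>c. subprod_prob (dihedral_group n) gs ps (c, e)"
    have "of_real (\<Sum>c \<in> {0..<int n}. ?f c) = dihedral_fourier n gs ps e 1"
      by (simp add: dihedral_fourier_def cyclic_fourier_def)
    also have "\<dots> = of_real (1/2)" using at_one[of e] by simp
    finally have total: "(\<Sum>c \<in> {0..<int n}. ?f c) = 1/2" by (simp only: of_real_eq_iff)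
    have "?f c = (\<Sum>c \<in> {0..<int n}. ?f c) / real n"
      using vanish by (intro cyclic_fourier_inversion[OF assms(1) _ that]) (simp add: dihedral_fourier_def)
    then show ?thesis unfolding total by (simp add: card_dihedral_group)
  qed
  then show ?thesis using assms(2-4) unfolding uniform_subproduct_def by auto
qed

section \<open>The construction\<close>

lemma rotations_carrier:
  "\<forall>k \<in> set ks. k < n \<Longrightarrow> set (map (\<lambda>k. (int k, False)) ks) \<subseteq> carrier (dihedral_group n)"
  by auto

lemma dihedral_fourier_fair_rotations:
  assumes "n > 0" "w ^ n = 1" "\<forall>k \<in> set ks. k < n"
    and "set gs \<subseteq> carrier (dihedral_group n)" "length ps = length gs"
  shows "dihedral_fourier n (map (\<lambda>k. (int k, False)) ks @ gs)
      (replicate (length ks) (1/2) @ ps) e w =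
    (\<Prod>k \<leftarrow> ks. (1 + w ^ k) / 2) * dihedral_fourier n gs ps e w"
  using assms(3)
proof (induction ks)
  case (Cons k ks)
  have "set (map (\<lambda>k. (int k, False)) ks @ gs) \<subseteq> carrier (dihedral_group n)"
    using rotations_carrier[of ks n] Cons.prems assms(4) by simp
  then show ?case
    using Cons assms(1,2,5)
    by (simp add: dihedral_fourier_Cons_rotation field_simps)
qed simp

lemma fair_rotations_vanish:
  fixes w :: complex
  assumes "w ^ (2 ^ t * m) = 1" "w ^ m \<noteq> 1"
  shows "(\<Prod>k \<leftarrow> map (\<lambda>j. m * 2 ^ j) [0..<t]. (1 + w ^ k) / 2) = 0"
proof -
  have "(w ^ m) ^ (2 ^ t) = 1" using assms(1) by (simp add: power_mult[symmetric] mult.commute)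
  then obtain j where "j < t" "(w ^ m) ^ (2 ^ j) = -1"
    using exists_power_two_eq_neg_one assms(2) by blast
  then have "(1 + w ^ (m * 2 ^ j)) / 2 = 0" by (simp add: power_mult)
  then show ?thesis
    unfolding prod_list_zero_iff set_map image_comp using \<open>j < t\<close> by (intro rev_image_eqI[of j]) auto
qed

lemma dihedral_fourier_round:
  assumes "n > 0" "w ^ n = 1" "c < n"
    and L: "set L \<subseteq> carrier (dihedral_group n)" "length P = length L"
    and symmetric: "dihedral_fourier n L P True w = w ^ \<beta> * cnj (dihedral_fourier n L P False w)"
  shows "dihedral_fourier n ((int (\<beta> + 2 * c) mod int n, True) # (int c, False) # L)
      (1/2 # p # P) False w =
    dihedral_fourier n L P False w * w ^ c * of_real ((1 - p) * Re (w ^ c) + p)"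
proof -
  let ?A = "dihedral_fourier n L P False w"
  let ?u = "w ^ c" and ?z = "1 - of_real p + of_real p * w ^ c"
  let ?b = "int (\<beta> + 2 * c) mod int n"
  have b: "0 \<le> ?b" "?b < int n" using assms(1) by simp_all
  have c: "0 \<le> int c" "int c < int n" using assms(3) by simp_all
  have rot_L: "set ((int c, False) # L) \<subseteq> carrier (dihedral_group n)"
    "length (p # P) = length ((int c, False) # L)"
    using L c by auto
  have rot: "dihedral_fourier n ((int c, False) # L) (p # P) e w = ?z * dihedral_fourier n L P e w" for e
    using dihedral_fourier_Cons_rotation[OF assms(1,2) c L] by simp
  have phase: "w powi ?b = w ^ \<beta> * ?u\<^sup>2"
    by (simp only: power_int_mod_root_unity[OF assms(2)] power_int_of_nat power_add power_mult
        mult.commute[of 2 c])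
  have "dihedral_fourier n ((?b, True) # (int c, False) # L) (1/2 # p # P) False w =
      (1 - of_real (1/2)) * dihedral_fourier n ((int c, False) # L) (p # P) False w +
      of_real (1/2) * w powi ?b * cnj (dihedral_fourier n ((int c, False) # L) (p # P) (\<not> False) w)"
    by (rule dihedral_fourier_Cons_reflection[OF assms(1,2) b rot_L])
  also have "\<dots> = 1/2 * ?A * (?z + (w ^ \<beta> * cnj (w ^ \<beta>)) * ?u\<^sup>2 * cnj ?z)"
    unfolding not_False_eq_True rot phase symmetric by (simp add: algebra_simps)
  also have "w ^ \<beta> * cnj (w ^ \<beta>) = 1"
    using powi_mult_cnj_root_unity[OF assms(1,2), of "int \<beta>"] by (simp only: power_int_of_nat)
  also have "?z + 1 * ?u\<^sup>2 * cnj ?z = 2 * ?u * of_real ((1 - p) * Re ?u + p)"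
  proof -
    have "norm ?u = 1" using norm_root_unity[OF assms(1,2)] by (simp add: norm_power)
    from affine_add_conj_rotated[OF this] show ?thesis by simp
  qed
  finally show ?thesis by simp
qed

(* The reflection closing round i sits at r^(2 (c 1 + ... + c i)), i.e. 2 c i further than the
   one closing round i - 1: this is the placement dihedral_fourier_round requires. *)
fun reflection_rounds :: "nat \<Rightarrow> (nat \<Rightarrow> nat) \<Rightarrow> nat \<Rightarrow> (int \<times> bool) list" where
  "reflection_rounds n c 0 = [(0, True)]"
| "reflection_rounds n c (Suc i) =
    (int (2 * (\<Sum>j = 1..Suc i. c j)) mod int n, True) # (int (c (Suc i)), False) #
    reflection_rounds n c i"

fun round_probs :: "(nat \<Rightarrow> real) \<Rightarrow> nat \<Rightarrow> real list" where
  "round_probs p 0 = [1/2]"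
| "round_probs p (Suc i) = 1/2 # p (Suc i) # round_probs p i"

lemma length_reflection_rounds [simp]: "length (reflection_rounds n c i) = 2 * i + 1"
  and length_round_probs [simp]: "length (round_probs p i) = 2 * i + 1"
  by (induction i) auto

lemma reflection_rounds_carrier:
  assumes "n > 0" "\<forall>j \<in> {1..i}. c j < n"
  shows "set (reflection_rounds n c i) \<subseteq> carrier (dihedral_group n)"
  using assms(2) by (induction i) (use assms(1) in auto)

lemma round_probs_range:
  "\<forall>j \<in> {1..i}. 0 \<le> p j \<and> p j \<le> 1 \<Longrightarrow> \<forall>q \<in> set (round_probs p i). 0 \<le> q \<and> q \<le> 1"
  by (induction i) auto

lemma dihedral_fourier_reflection_rounds_symmetry:
  assumes "n > 0" "w ^ n = 1" "\<forall>j \<in> {1..i}. c j < n"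
  shows "dihedral_fourier n (reflection_rounds n c i) (round_probs p i) True w =
    w ^ (2 * (\<Sum>j = 1..i. c j)) *
    cnj (dihedral_fourier n (reflection_rounds n c i) (round_probs p i) False w)"
proof (cases i)
  case 0
  then show ?thesis
    using dihedral_fourier_fair_reflection[OF assms(1,2), of 0 "[]" "[]"] assms(1) by simp
next
  case (Suc i')
  let ?b = "int (2 * (\<Sum>j = 1..i. c j))"
  have "set ((int (c i), False) # reflection_rounds n c i') \<subseteq> carrier (dihedral_group n)"
    using reflection_rounds_carrier[OF assms(1), of i' c] assms(3) Suc by auto
  then have "dihedral_fourier n (reflection_rounds n c i) (round_probs p i) True w =
      w powi (?b mod int n) * cnj (dihedral_fourier n (reflection_rounds n c i) (round_probs p i) False w)"
    using Suc assms(1,2) by (simp add: dihedral_fourier_fair_reflection del: sum.cl_ivl_Suc)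
  then show ?thesis by (simp only: power_int_mod_root_unity[OF assms(2)] power_int_of_nat)
qed

lemma dihedral_fourier_reflection_rounds:
  assumes "n > 0" "w ^ n = 1" "\<forall>j \<in> {1..i}. c j < n"
  shows "dihedral_fourier n (reflection_rounds n c i) (round_probs p i) False w =
    1/2 * (\<Prod>j = 1..i. w ^ c j * of_real ((1 - p j) * Re (w ^ c j) + p j))"
  using assms(3)
proof (induction i)
  case 0
  then show ?case
    using dihedral_fourier_fair_reflection[OF assms(1,2), of 0 "[]" "[]"]
    by (simp add: dihedral_fourier_Cons_reflection assms dihedral_fourier_Nil)
next
  case (Suc i)
  have range: "\<forall>j \<in> {1..i}. c j < n" using Suc.prems by simp
  have "2 * (\<Sum>j = 1..Suc i. c j) = 2 * (\<Sum>j = 1..i. c j) + 2 * c (Suc i)" by simp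
  then have "dihedral_fourier n (reflection_rounds n c (Suc i)) (round_probs p (Suc i)) False w =
      dihedral_fourier n (reflection_rounds n c i) (round_probs p i) False w *
      w ^ c (Suc i) * of_real ((1 - p (Suc i)) * Re (w ^ c (Suc i)) + p (Suc i))"
    using reflection_rounds_carrier[OF assms(1) range] Suc.prems
    by (simp only: reflection_rounds.simps round_probs.simps)
      (rule dihedral_fourier_round[OF assms(1,2) _ _ _
          dihedral_fourier_reflection_rounds_symmetry[OF assms(1,2) range]], simp_all)
  then show ?case using Suc.IH[OF range] by simp
qed

lemma balancing_weight:
  fixes x :: real
  assumes "x \<le> 0"
  shows "0 \<le> - x / (1 - x)" "- x / (1 - x) \<le> 1" "(1 - - x / (1 - x)) * x + - x / (1 - x) = 0"
  using assms by (simp_all add: field_simps)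

lemma balanced_rounds_vanish:
  assumes "m = 2 * h + 1" "w ^ m = 1" "w \<noteq> 1"
    and balanced: "\<forall>i \<in> {1..h}. (1 - p i) * Re (cis (2 * pi * real i / real m) ^ c i) + p i = 0"
  shows "(\<Prod>j = 1..h. w ^ c j * of_real ((1 - p j) * Re (w ^ c j) + p j)) = 0"
proof -
  obtain i where i: "i \<in> {1..h}"
    and w: "w = cis (2 * pi * real i / real m) \<or> w = cnj (cis (2 * pi * real i / real m))"
    using odd_root_unity_cases[OF assms(1-3)] by blast
  from w have "Re (w ^ c i) = Re (cis (2 * pi * real i / real m) ^ c i)"
    by (auto simp flip: complex_cnj_power)
  then have "(1 - p i) * Re (w ^ c i) + p i = 0" using i balanced by simp
  then show ?thesis using i by (intro prod_zero bexI[of _ i]) simp_all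
qed

lemma uniform_subproduct_rotations_reflection_rounds:
  assumes "n > 0" and m: "m = 2 * h + 1"
    and ks: "\<forall>k \<in> set ks. k < n"
    and rotations_vanish:
      "\<And>w :: complex. w ^ n = 1 \<Longrightarrow> w ^ m \<noteq> 1 \<Longrightarrow> (\<Prod>k \<leftarrow> ks. (1 + w ^ k) / 2) = 0"
    and c: "\<forall>i \<in> {1..h}. c i < n"
    and p: "\<forall>i \<in> {1..h}. 0 \<le> p i \<and> p i \<le> 1"
    and balanced: "\<forall>i \<in> {1..h}. (1 - p i) * Re (cis (2 * pi * real i / real m) ^ c i) + p i = 0"
  shows "uniform_subproduct (dihedral_group n)
    (map (\<lambda>k. (int k, False)) ks @ reflection_rounds n c h)
    (replicate (length ks) (1/2) @ round_probs p h)"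
proof (rule uniform_subproduct_dihedralI[OF \<open>n > 0\<close>])
  let ?R = "reflection_rounds n c h" and ?Q = "round_probs p h"
  have R: "set ?R \<subseteq> carrier (dihedral_group n)" "length ?Q = length ?R"
    using reflection_rounds_carrier[OF \<open>n > 0\<close> c] by simp_all
  note fourier = dihedral_fourier_fair_rotations[OF \<open>n > 0\<close> _ ks R]
  note rounds = dihedral_fourier_reflection_rounds[OF \<open>n > 0\<close> _ c]
    dihedral_fourier_reflection_rounds_symmetry[OF \<open>n > 0\<close> _ c]
  show "set (map (\<lambda>k. (int k, False)) ks @ ?R) \<subseteq> carrier (dihedral_group n)"
    using rotations_carrier[OF ks] R by simp
  show "\<forall>q \<in> set (replicate (length ks) (1/2) @ ?Q). 0 \<le> q \<and> q \<le> 1"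
    using round_probs_range[OF p] by auto
  show "dihedral_fourier n (map (\<lambda>k. (int k, False)) ks @ ?R)
      (replicate (length ks) (1/2) @ ?Q) e 1 = 1/2" for e
    by (cases e) (simp_all add: fourier rounds comp_def map_replicate_const)
  show "dihedral_fourier n (map (\<lambda>k. (int k, False)) ks @ ?R)
      (replicate (length ks) (1/2) @ ?Q) e w = 0"
    if "w ^ n = 1" "w \<noteq> 1" for e w
  proof (cases "w ^ m = 1")
    case True
    then show ?thesis
      using balanced_rounds_vanish[OF m True \<open>w \<noteq> 1\<close> balanced] that
      by (cases e) (simp_all add: fourier rounds)
  next
    case False
    then show ?thesis using rotations_vanish[OF that(1)] by (simp add: fourier[OF that(1)])
  qed
qed simp

theorem mainTheorem17:
  fixes n t m :: nat
  assumes "n = 2 ^ t * m" and "odd m"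
  shows "mixlen (dihedral_group n) \<le> t + m"
proof -
  obtain h where m: "m = 2 * h + 1" using \<open>odd m\<close> by (blast elim: oddE)
  then have "m > 0" by simp
  then have "n > 0" "m \<le> n" using assms(1) by simp_all
  let ?ks = "map (\<lambda>j. m * 2 ^ j) [0..<t]" and ?u = "\<lambda>i. cis (2 * pi * real i / real m)"
  have ks: "\<forall>k \<in> set ?ks. k < n" using assms(1) \<open>m > 0\<close> by auto
  have "\<forall>i \<in> {1..h}. \<exists>c < m. Re (?u i ^ c) \<le> 0"
    using m by (intro ballI exists_cis_power_Re_nonpos) auto
  from bchoice[OF this] obtain c where c: "\<forall>i \<in> {1..h}. c i < m \<and> Re (?u i ^ c i) \<le> 0"
    by blast
  define p where "p i = - Re (?u i ^ c i) / (1 - Re (?u i ^ c i))" for i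
  have c_n: "\<forall>i \<in> {1..h}. c i < n" using c \<open>m \<le> n\<close> by fastforce
  have "(\<Prod>k \<leftarrow> ?ks. (1 + w ^ k) / 2) = 0" if "w ^ n = 1" "w ^ m \<noteq> 1" for w :: complex
    using that unfolding assms(1) by (rule fair_rotations_vanish)
  from uniform_subproduct_rotations_reflection_rounds[OF \<open>n > 0\<close> m ks this c_n]
  have "uniform_subproduct (dihedral_group n)
      (map (\<lambda>k. (int k, False)) ?ks @ reflection_rounds n c h)
      (replicate (length ?ks) (1/2) @ round_probs p h)"
    using c balancing_weight unfolding p_def by simp
  from mixlen_le[OF this] show ?thesis using m by simp
qed

end
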